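(* Let $p$ be an odd prime, let $G_p=V\rtimes C$ be as described in the context, and let $c$ be a fixed generator of $C$. Let $X=\{c,w_2,\dots,w_n\}$ where $w_2,\dots,w_n\in V$, and assume $X$ generates $G_p$. Then every $v\in V$ can be written as a word of length at most $3(p-1)$ in $X$ (inverses permitted) in which the elements $w_2,\dots,w_n$ occur a total of at most $p-1$ times.
   Context: The wreath product $W_p=C_2\wr C_p$ is $U\rtimes C_p$ with $U=\mathbb{F}_2^{\,p}$ and a generator of the cyclic group $C_p$ of order $p$ acting on $U$ by cyclically permuting coordinates. Its center is $T=\{(0,\dots,0),(1,\dots,1)\}$, and $G_p=W_p/T=V\rtimes C$, where $V=U/T$ is an $\mathbb{F}_2$-vector space of dimension $p-1$ (a normal subgroup of $G_p$) and $C$, the image of $C_p$, is cyclic of order $p$. *)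

theory Defs
  imports "HOL-Algebra.Coset" "HOL-Algebra.Generated_Groups" "HOL-Computational_Algebra.Primes"
begin

text \<open>Concrete model of the wreath product W_p = C_2 wr C_p.
  An element of U = F_2^p is modelled as its support, a subset of {0..<p};
  addition in U is symmetric difference.  An element of W_p is a pair (u,k)
  with u in U and k in {0..<p} (k standing for the k-th power of the generator
  of C_p).\<close>

definition shift :: "nat \<Rightarrow> nat \<Rightarrow> nat set \<Rightarrow> nat set" where
  "shift p k u = (\<lambda>i. (i + k) mod p) ` u"

definition symdiff :: "nat set \<Rightarrow> nat set \<Rightarrow> nat set" where
  "symdiff u v = (u - v) \<union> (v - u)"

definition Wmult :: "nat \<Rightarrow> nat set \<times> nat \<Rightarrow> nat set \<times> nat \<Rightarrow> nat set \<times> nat" where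
  "Wmult p x y = (symdiff (fst x) (shift p (snd x) (fst y)), (snd x + snd y) mod p)"

definition Wp :: "nat \<Rightarrow> (nat set \<times> nat) monoid" where
  "Wp p = \<lparr> carrier = {x. fst x \<subseteq> {..<p} \<and> snd x < p},
            monoid.mult = Wmult p,
            one = ({}, 0) \<rparr>"

text \<open>The centre T = {(0,...,0),(1,...,1)} of W_p.\<close>
definition Tp :: "nat \<Rightarrow> (nat set \<times> nat) set" where
  "Tp p = {({}, 0), ({..<p}, 0)}"

definition Gp :: "nat \<Rightarrow> (nat set \<times> nat) set monoid" where
  "Gp p = Wp p Mod Tp p"

definition Vp :: "nat \<Rightarrow> (nat set \<times> nat) set set" where
  "Vp p = {Tp p #>\<^bsub>Wp p\<^esub> (u, 0) | u. u \<subseteq> {..<p}}"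

definition Cp :: "nat \<Rightarrow> (nat set \<times> nat) set set" where
  "Cp p = {Tp p #>\<^bsub>Wp p\<^esub> ({}, k) | k. k < p}"

definition word_eval :: "('a, 'b) monoid_scheme \<Rightarrow> ('a \<times> bool) list \<Rightarrow> 'a" where
  "word_eval G ws = foldr (\<lambda>(x, b) acc. (if b then inv\<^bsub>G\<^esub> x else x) \<otimes>\<^bsub>G\<^esub> acc) ws \<one>\<^bsub>G\<^esub>"

end

theory Submission
  imports Defs "HOL-Algebra.FiniteProduct"
begin

(* Since V is normal, c^p = 1 and V meets the powers of c trivially, every element of the group
  generated by c and W has the form m c^k with m in the subgroup M generated by the conjugates
  c^i w c^(-i), i < p, w in W; so V = M.  As V is a Boolean group (an F_2-vector space) of order
  at most 2^(p-1), each v in V is the product of a set of such conjugates, and a set of minimal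
  size has pairwise distinct subset products, hence at most p - 1 elements.  Listing them with
  exponents i_1 <= ... <= i_m, the word c^(i_1) w_1 c^(i_2-i_1) w_2 ... w_m c^(-i_m) spells v
  with m <= p - 1 letters from W and at most 2(p - 1) letters c or c^(-1). *)

lemma word_eval_Nil [simp]: "word_eval G [] = \<one>\<^bsub>G\<^esub>"
  by (simp add: word_eval_def)

lemma word_eval_Cons [simp]:
  "word_eval G ((x, b) # ws) = (if b then inv\<^bsub>G\<^esub> x else x) \<otimes>\<^bsub>G\<^esub> word_eval G ws"
  by (simp add: word_eval_def)

context group
begin

lemma word_eval_closed: "fst ` set ws \<subseteq> carrier G \<Longrightarrow> word_eval G ws \<in> carrier G"
  by (induction ws) auto

lemma word_eval_append:
  "fst ` set xs \<subseteq> carrier G \<Longrightarrow> fst ` set ys \<subseteq> carrier G \<Longrightarrow>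
   word_eval G (xs @ ys) = word_eval G xs \<otimes> word_eval G ys"
  by (induction xs) (auto simp: m_assoc word_eval_closed)

lemma word_eval_replicate: "x \<in> carrier G \<Longrightarrow> word_eval G (replicate n (x, False)) = x [^] n"
  by (induction n) (simp_all, metis nat_pow_Suc nat_pow_Suc2)

lemma word_eval_replicate_inv:
  "x \<in> carrier G \<Longrightarrow> word_eval G (replicate n (x, True)) = inv (x [^] n)"
  by (induction n) (simp_all add: inv_mult_group)

end

(* The word c^(i_1-k) w_1 c^(i_2-i_1) w_2 ... w_m c^(-i_m).  For k <= i_1 <= ... <= i_m the powers
  of c telescope and it evaluates to c^(-k) times the product of the conjugates c^i w c^(-i). *)
fun conj_word :: "'a \<Rightarrow> nat \<Rightarrow> (nat \<times> 'a) list \<Rightarrow> ('a \<times> bool) list" where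
  "conj_word c k [] = replicate k (c, True)"
| "conj_word c k ((i, w) # r) = replicate (i - k) (c, False) @ (w, False) # conj_word c i r"

lemma set_conj_word: "fst ` set (conj_word c k r) \<subseteq> insert c (snd ` set r)"
  by (induction c k r rule: conj_word.induct) auto

lemma length_filter_conj_word:
  "c \<notin> A \<Longrightarrow> snd ` set r \<subseteq> A \<Longrightarrow>
   length (filter (\<lambda>x. fst x \<in> A) (conj_word c k r)) = length r"
  by (induction c k r rule: conj_word.induct) (auto simp: filter_empty_conv)

lemma length_conj_word:
  "sorted (k # map fst r) \<Longrightarrow> fst ` set r \<subseteq> {..n} \<Longrightarrow> k \<le> n \<Longrightarrow>
   length (conj_word c k r) \<le> length r + 2 * n - k"
proof (induction c k r rule: conj_word.induct)
  case (2 c k i w r)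
  then have "length (conj_word c i r) \<le> length r + 2 * n - i" by auto
  then show ?case using "2.prems" by auto
qed simp

lemma (in group) word_eval_conj_word:
  assumes "c \<in> carrier G" "snd ` set r \<subseteq> carrier G" "sorted (k # map fst r)"
  shows "word_eval G (conj_word c k r) =
    inv (c [^] k) \<otimes> foldr (\<lambda>(i, w) x. c [^] i \<otimes> w \<otimes> inv (c [^] i) \<otimes> x) r \<one>"
  using assms
proof (induction c k r rule: conj_word.induct)
  case (1 c k)
  then show ?case by (simp add: word_eval_replicate_inv)
next
  case (2 c k i w r)
  define P where "P = foldr (\<lambda>(i, w) x. c [^] i \<otimes> w \<otimes> inv (c [^] i) \<otimes> x) r \<one>"
  have w: "w \<in> carrier G" and ki: "k \<le> i" using "2.prems" by auto
  have P: "P \<in> carrier G" unfolding P_def using "2.prems" by (induction r) auto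
  have letters: "fst ` set (conj_word c i r) \<subseteq> carrier G"
    using set_conj_word[of c i r] "2.prems" by auto
  have ci: "c [^] i = c [^] k \<otimes> c [^] (i - k)"
    using ki "2.prems" by (simp add: nat_pow_mult)
  have "word_eval G (conj_word c k ((i, w) # r)) = c [^] (i - k) \<otimes> (w \<otimes> (inv (c [^] i) \<otimes> P))"
    using "2" w letters word_eval_append[of "replicate (i - k) (c, False)" "(w, False) # conj_word c i r"]
    by (simp add: word_eval_replicate image_subset_iff P_def)
  also have "\<dots> = inv (c [^] k) \<otimes> (c [^] i \<otimes> w \<otimes> inv (c [^] i) \<otimes> P)"
    unfolding ci using "2.prems" w P by (simp add: m_assoc inv_solve_left)
  finally show ?case by (simp add: P_def)
qed

lemma (in comm_monoid) finprod_set_eq_foldr: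
  "distinct xs \<Longrightarrow> f \<in> set xs \<rightarrow> carrier G \<Longrightarrow>
   finprod G f (set xs) = foldr (\<lambda>x. (\<otimes>) (f x)) xs \<one>"
  by (induction xs) (auto simp: finprod_insert)

lemma (in comm_monoid) finprod_singleton_eq: "f i \<in> carrier G \<Longrightarrow> finprod G f {i} = f i"
  using finprod_insert[of "{}" i f] by simp

locale boolean_group = group +
  assumes square_eq_one: "x \<in> carrier G \<Longrightarrow> x \<otimes> x = \<one>"

sublocale boolean_group \<subseteq> comm_group
proof (rule group_comm_groupI)
  fix x y assume "x \<in> carrier G" "y \<in> carrier G"
  then have "inv (x \<otimes> y) = x \<otimes> y" "inv x = x" "inv y = y"
    by (simp_all add: inv_equality square_eq_one)
  then show "x \<otimes> y = y \<otimes> x"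
    using \<open>x \<in> carrier G\<close> \<open>y \<in> carrier G\<close> by (metis inv_mult_group)
qed

context boolean_group
begin

lemma finprod_symdiff:
  assumes "finite A" "finite B" "f \<in> A \<union> B \<rightarrow> carrier G"
  shows "finprod G f A \<otimes> finprod G f B = finprod G f (sym_diff A B)"
proof -
  let ?P = "finprod G f"
  have f: "f \<in> A \<rightarrow> carrier G" "f \<in> B \<rightarrow> carrier G" using assms(3) by auto
  have split: "?P X = ?P (X - Y) \<otimes> ?P (X \<inter> Y)"
    if "finite X" "f \<in> X \<rightarrow> carrier G" for X Y
  proof -
    have "?P ((X - Y) \<union> (X \<inter> Y)) = ?P (X - Y) \<otimes> ?P (X \<inter> Y)"
      by (rule finprod_Un_disjoint) (use that in auto)
    then show ?thesis by (simp add: Un_Diff_Int)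
  qed
  have A: "?P A = ?P (A - B) \<otimes> ?P (A \<inter> B)" using split assms f by blast
  have B: "?P B = ?P (B - A) \<otimes> ?P (A \<inter> B)" using split[of B A] assms f by (simp add: Int_commute)
  have closed: "?P (A - B) \<in> carrier G" "?P (B - A) \<in> carrier G" "?P (A \<inter> B) \<in> carrier G"
    using assms(3) by (auto intro!: finprod_closed)
  have "?P A \<otimes> ?P B = ?P (A - B) \<otimes> ?P (B - A) \<otimes> (?P (A \<inter> B) \<otimes> ?P (A \<inter> B))"
    unfolding A B using closed by (simp add: m_ac)
  also have "\<dots> = ?P (A - B) \<otimes> ?P (B - A)"
    using closed by (simp add: square_eq_one)
  also have "\<dots> = ?P (sym_diff A B)"
    by (rule finprod_Un_disjoint[symmetric]) (use assms f in auto)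
  finally show ?thesis .
qed

lemma generate_image_subset_prod:
  assumes "finite I" "f \<in> I \<rightarrow> carrier G" "g \<in> generate G (f ` I)"
  shows "\<exists>J \<subseteq> I. finprod G f J = g"
  using assms(3)
proof (induction g rule: generate.induct)
  case one
  show ?case by (intro exI[of _ "{}"]) auto
next
  case (incl h)
  then obtain i where "i \<in> I" "h = f i" by blast
  moreover have "f i \<in> carrier G" using assms(2) \<open>i \<in> I\<close> by blast
  ultimately show ?case by (intro exI[of _ "{i}"]) (auto simp: finprod_singleton_eq)
next
  case (inv h)
  then obtain i where i: "i \<in> I" "h = f i" by blast
  have "f i \<in> carrier G" using assms(2) i(1) by blast
  then have "inv h = h" using i(2) by (auto intro: inv_equality square_eq_one)
  then show ?case using i \<open>f i \<in> carrier G\<close> by (intro exI[of _ "{i}"]) (auto simp: finprod_singleton_eq)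
next
  case (eng g h)
  then obtain A B where "A \<subseteq> I" "finprod G f A = g" "B \<subseteq> I" "finprod G f B = h" by blast
  moreover have "finite A" "finite B" using \<open>A \<subseteq> I\<close> \<open>B \<subseteq> I\<close> assms(1) finite_subset by auto
  moreover have "f \<in> A \<union> B \<rightarrow> carrier G" using \<open>A \<subseteq> I\<close> \<open>B \<subseteq> I\<close> assms(2) by auto
  ultimately show ?case using finprod_symdiff[of A B f] by (intro exI[of _ "sym_diff A B"]) auto
qed

lemma short_subset_prod:
  assumes "finite (carrier G)" "finite I" "f \<in> I \<rightarrow> carrier G"
  shows "\<exists>J \<subseteq> I. finprod G f J = finprod G f I \<and> 2 ^ card J \<le> order G"
proof -
  obtain J where J: "J \<subseteq> I" "finprod G f J = finprod G f I"
    and minimal: "\<And>J'. J' \<subseteq> I \<and> finprod G f J' = finprod G f I \<Longrightarrow> card J \<le> card J'"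
    using ex_has_least_nat[of "\<lambda>J. J \<subseteq> I \<and> finprod G f J = finprod G f I" I card] by blast
  have finJ: "finite J" and fJ: "f \<in> J \<rightarrow> carrier G" using J assms finite_subset by auto
  have "inj_on (finprod G f) (Pow J)"
  proof (rule inj_onI)
    fix A B assume AB: "A \<in> Pow J" "B \<in> Pow J" "finprod G f A = finprod G f B"
    define D where "D = sym_diff A B"
    have D: "D \<subseteq> J" using AB unfolding D_def by auto
    then have finD: "finite D" using finJ by (rule finite_subset)
    have "finite A" "finite B" using AB finJ finite_subset by auto
    then have "finprod G f A \<otimes> finprod G f B = finprod G f D"
      unfolding D_def using AB fJ by (intro finprod_symdiff) auto
    moreover have "finprod G f B \<in> carrier G" using AB(2) fJ by (auto intro!: finprod_closed)
    ultimately have "finprod G f D = \<one>" using AB(3) by (simp add: square_eq_one)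
    moreover have "finprod G f ((J - D) \<union> D) = finprod G f (J - D) \<otimes> finprod G f D"
      by (rule finprod_Un_disjoint) (use D finD finJ fJ in auto)
    moreover have "(J - D) \<union> D = J" using D by blast
    moreover have "finprod G f (J - D) \<in> carrier G" using fJ by (auto intro!: finprod_closed)
    ultimately have "finprod G f (J - D) = finprod G f I" using J(2) by simp
    then have "card J \<le> card (J - D)" using minimal J by blast
    then have "card D = 0" using card_Diff_subset[OF finD D] card_mono[OF finJ D] by linarith
    then have "D = {}" using finD by simp
    then show "A = B" unfolding D_def by blast
  qed
  then have "card (Pow J) \<le> card (carrier G)"
    by (rule card_inj_on_le) (use fJ assms(1) in \<open>auto intro: finprod_closed\<close>)
  then show ?thesis using J finJ by (auto simp: card_Pow order_def)
qed

end

lemma (in group) generate_conj_closed: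
  assumes "H \<subseteq> carrier G" "g \<in> carrier G" "\<And>h. h \<in> H \<Longrightarrow> g \<otimes> h \<otimes> inv g \<in> H"
    and "x \<in> generate G H"
  shows "g \<otimes> x \<otimes> inv g \<in> generate G H"
  using assms(4)
proof (induction x rule: generate.induct)
  case one
  show ?case using assms(2) by (simp add: generate.one)
next
  case (incl h)
  show ?case using assms(3)[OF incl] by (rule generate.incl)
next
  case (inv h)
  have "g \<otimes> inv h \<otimes> inv g = inv (g \<otimes> h \<otimes> inv g)"
    using assms(1,2) inv by (auto simp: inv_mult_group m_assoc)
  then show ?case using generate.inv[OF assms(3)[OF inv]] by simp
next
  case (eng x y)
  have "x \<in> carrier G" "y \<in> carrier G" using eng.hyps assms(1) generate_in_carrier by auto
  then have "g \<otimes> (x \<otimes> y) \<otimes> inv g = (g \<otimes> x \<otimes> inv g) \<otimes> (g \<otimes> y \<otimes> inv g)"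
    using assms(2) by (simp add: m_assoc inv_solve_left)
  then show ?case using generate.eng[OF eng.IH] by simp
qed

locale boolean_by_cyclic = group G for G (structure) +
  fixes V :: "'a set" and c :: 'a and p :: nat
  assumes V_normal: "V \<lhd> G"
    and V_square: "x \<in> V \<Longrightarrow> x \<otimes> x = \<one>"
    and c_closed [simp]: "c \<in> carrier G"
    and c_ne_one: "c \<noteq> \<one>"
    and p_pos: "0 < p"
    and c_pow_p: "c [^] p = \<one>"
    and c_pow_in_V: "c [^] (k :: nat) \<in> V \<Longrightarrow> c [^] k = \<one>"
begin

lemma V_subgroup: "subgroup V G"
  using V_normal normal_imp_subgroup by blast

lemma V_subset: "V \<subseteq> carrier G"
  using V_subgroup subgroup.subset by blast

lemma boolean_group_V: "boolean_group (G\<lparr>carrier := V\<rparr>)"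
  by (rule boolean_group.intro[OF subgroup_imp_group[OF V_subgroup]]) (unfold_locales, simp add: V_square)

lemma c_notin_V: "c \<notin> V"
  using c_pow_in_V[of 1] c_ne_one by auto

lemma c_pow_mod: "c [^] n = c [^] (n mod p)"
proof -
  have "c [^] n = (c [^] p) [^] (n div p) \<otimes> c [^] (n mod p)"
    by (simp add: nat_pow_pow nat_pow_mult)
  then show ?thesis by (simp add: c_pow_p)
qed

lemma inv_c: "inv c = c [^] (p - 1)"
proof (rule inv_equality)
  show "c [^] (p - 1) \<otimes> c = \<one>"
    using p_pos c_pow_p by (metis Suc_diff_1 nat_pow_Suc)
qed simp_all

definition c_conj :: "nat \<times> 'a \<Rightarrow> 'a" where
  "c_conj q = c [^] fst q \<otimes> snd q \<otimes> inv (c [^] fst q)"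

lemma c_conj_in_V: "snd q \<in> V \<Longrightarrow> c_conj q \<in> V"
  using V_normal by (simp add: c_conj_def normal_inv_iff)

lemma c_conj_closed: "snd q \<in> carrier G \<Longrightarrow> c_conj q \<in> carrier G"
  by (simp add: c_conj_def)

lemma conj_c_conj:
  "w \<in> carrier G \<Longrightarrow> c [^] k \<otimes> c_conj (i, w) \<otimes> inv (c [^] k) = c_conj ((k + i) mod p, w)"
proof -
  assume w: "w \<in> carrier G"
  have "c [^] (k + i) = c [^] k \<otimes> c [^] i" by (simp add: nat_pow_mult)
  then have "c [^] k \<otimes> c_conj (i, w) \<otimes> inv (c [^] k) = c_conj (k + i, w)"
    using w by (simp add: c_conj_def m_assoc inv_mult_group)
  then show ?thesis using c_pow_mod[of "k + i"] by (simp add: c_conj_def)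
qed

lemma W_subset_generate_c_conj: "W \<subseteq> V \<Longrightarrow> W \<subseteq> generate G (c_conj ` ({..<p} \<times> W))"
proof
  fix w assume "W \<subseteq> V" "w \<in> W"
  then have "c_conj (0, w) = w" using V_subset by (auto simp: c_conj_def)
  moreover have "c_conj (0, w) \<in> generate G (c_conj ` ({..<p} \<times> W))"
    using \<open>w \<in> W\<close> p_pos by (intro generate.incl) auto
  ultimately show "w \<in> generate G (c_conj ` ({..<p} \<times> W))" by simp
qed

lemma generate_c_conj_conj_closed:
  assumes "W \<subseteq> V" "m \<in> generate G (c_conj ` ({..<p} \<times> W))"
  shows "c [^] (k::nat) \<otimes> m \<otimes> inv (c [^] k) \<in> generate G (c_conj ` ({..<p} \<times> W))"
  using assms V_subset p_pos c_conj_closed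
  by (intro generate_conj_closed) (auto simp: conj_c_conj subset_iff)

lemma generate_insert_c_decomp:
  assumes "W \<subseteq> V" "g \<in> generate G (insert c W)"
  shows "\<exists>m \<in> generate G (c_conj ` ({..<p} \<times> W)). \<exists>k::nat. g = m \<otimes> c [^] k"
proof -
  let ?M = "generate G (c_conj ` ({..<p} \<times> W))"
  have M: "subgroup ?M G"
    by (rule generate_is_subgroup) (use assms(1) V_subset c_conj_closed in auto)
  have W_M: "W \<subseteq> ?M" by (rule W_subset_generate_c_conj[OF assms(1)])
  from assms(2) show ?thesis
  proof (induction g rule: generate.induct)
    case one
    show ?case using subgroup.one_closed[OF M] by (intro bexI[of _ \<one>] exI[of _ 0]) auto
  next
    case (incl h)
    show ?case
    proof (cases "h = c")
      case True
      then show ?thesis using subgroup.one_closed[OF M] by (intro bexI[of _ \<one>] exI[of _ 1]) auto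
    next
      case False
      then have "h \<in> ?M" using incl W_M by auto
      then show ?thesis using subgroup.subset[OF M] by (intro bexI[of _ h] exI[of _ 0]) auto
    qed
  next
    case (inv h)
    show ?case
    proof (cases "h = c")
      case True
      then show ?thesis using subgroup.one_closed[OF M] inv_c by (intro bexI[of _ \<one>] exI[of _ "p - 1"]) auto
    next
      case False
      then have "inv h \<in> ?M" using inv W_M subgroup.m_inv_closed[OF M] by auto
      then show ?thesis using subgroup.subset[OF M] by (intro bexI[of _ "inv h"] exI[of _ 0]) auto
    qed
  next
    case (eng g h)
    then obtain m k n l where mn: "m \<in> ?M" "n \<in> ?M" and "g = m \<otimes> c [^] (k::nat)" "h = n \<otimes> c [^] (l::nat)"
      by blast
    moreover have "m \<in> carrier G" "n \<in> carrier G" using mn subgroup.subset[OF M] by auto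
    ultimately have "g \<otimes> h = (m \<otimes> (c [^] k \<otimes> n \<otimes> inv (c [^] k))) \<otimes> c [^] (k + l)"
      by (simp add: m_assoc nat_pow_mult inv_solve_left)
    moreover have "m \<otimes> (c [^] k \<otimes> n \<otimes> inv (c [^] k)) \<in> ?M"
      using subgroup.m_closed[OF M mn(1) generate_c_conj_conj_closed[OF assms(1) mn(2)]] .
    ultimately show ?case by blast
  qed
qed

lemma V_subset_generate_c_conj:
  assumes "W \<subseteq> V" "generate G (insert c W) = carrier G"
  shows "V \<subseteq> generate G (c_conj ` ({..<p} \<times> W))"
proof
  fix v assume v: "v \<in> V"
  then obtain m k where m: "m \<in> generate G (c_conj ` ({..<p} \<times> W))" and vm: "v = m \<otimes> c [^] (k::nat)"
    using generate_insert_c_decomp[OF assms(1)] assms(2) V_subset by blast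
  have "c_conj ` ({..<p} \<times> W) \<subseteq> V" using assms(1) c_conj_in_V by auto
  then have mV: "m \<in> V" using m generate_subgroup_incl[OF _ V_subgroup] by blast
  then have "c [^] k = inv m \<otimes> v" using vm v V_subset by (auto simp: inv_solve_left)
  then have "c [^] k \<in> V" using mV v V_subgroup by (auto intro: subgroup.m_closed subgroup.m_inv_closed)
  then have "v = m" using c_pow_in_V vm mV V_subset by auto
  then show "v \<in> generate G (c_conj ` ({..<p} \<times> W))" using m by simp
qed

lemma c_conj_prod_word:
  assumes "W \<subseteq> V" "finite Q" "Q \<subseteq> {..<p} \<times> W"
  shows "\<exists>ws. (\<forall>x \<in> set ws. fst x \<in> insert c W) \<and>
           length ws \<le> card Q + 2 * (p - 1) \<and>
           length (filter (\<lambda>x. fst x \<in> W) ws) = card Q \<and>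
           word_eval G ws = finprod (G\<lparr>carrier := V\<rparr>) c_conj Q"
proof -
  interpret V: boolean_group "G\<lparr>carrier := V\<rparr>" by (rule boolean_group_V)
  obtain xs where xs: "set xs = Q" "distinct xs" using finite_distinct_list[OF assms(2)] by blast
  define r where "r = sort_key fst xs"
  have r: "set r = Q" "distinct r" "length r = card Q" "sorted (0 # map fst r)"
    using xs by (auto simp: r_def distinct_card[symmetric])
  have r_sub: "fst ` set r \<subseteq> {..p - 1}" "snd ` set r \<subseteq> W" using r(1) assms(3) by auto
  define ws where "ws = conj_word c 0 r"
  have "c_conj \<in> Q \<rightarrow> V" using assms(1,3) c_conj_in_V by auto
  then have "foldr (\<lambda>q. (\<otimes>) (c_conj q)) r \<one> = finprod (G\<lparr>carrier := V\<rparr>) c_conj Q"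
    and "finprod (G\<lparr>carrier := V\<rparr>) c_conj Q \<in> V"
    using V.finprod_set_eq_foldr[of r c_conj] V.finprod_closed[of c_conj Q] r(1,2) by auto
  moreover have "(\<lambda>(i, w). (\<otimes>) (c [^] i \<otimes> w \<otimes> inv (c [^] i))) = (\<lambda>q. (\<otimes>) (c_conj q))"
    by (auto simp: c_conj_def)
  ultimately have "word_eval G ws = finprod (G\<lparr>carrier := V\<rparr>) c_conj Q"
    unfolding ws_def using r(4) r_sub assms(1) V_subset by (subst word_eval_conj_word) auto
  moreover have "\<forall>x \<in> set ws. fst x \<in> insert c W"
    using set_conj_word[of c 0 r] r_sub unfolding ws_def by auto
  moreover have "length ws \<le> card Q + 2 * (p - 1)"
    using length_conj_word[of 0 r "p - 1" c] r r_sub unfolding ws_def by simp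
  moreover have "length (filter (\<lambda>x. fst x \<in> W) ws) = card Q"
    using length_filter_conj_word[of c W r 0] c_notin_V assms(1) r r_sub unfolding ws_def by auto
  ultimately show ?thesis by blast
qed

theorem short_word:
  assumes "W \<subseteq> V" "generate G (insert c W) = carrier G" "finite V" "card V \<le> 2 ^ d" "v \<in> V"
  shows "\<exists>ws. (\<forall>x \<in> set ws. fst x \<in> insert c W) \<and>
           length ws \<le> d + 2 * (p - 1) \<and>
           length (filter (\<lambda>x. fst x \<in> W) ws) \<le> d \<and>
           word_eval G ws = v"
proof -
  interpret V: boolean_group "G\<lparr>carrier := V\<rparr>" by (rule boolean_group_V)
  let ?I = "{..<p} \<times> W"
  have fin: "finite ?I" using assms(1,3) finite_subset by blast
  have f: "c_conj \<in> ?I \<rightarrow> carrier (G\<lparr>carrier := V\<rparr>)" using assms(1) c_conj_in_V by auto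
  have "c_conj ` ?I \<subseteq> V" using f by auto
  then have "v \<in> generate (G\<lparr>carrier := V\<rparr>) (c_conj ` ?I)"
    using V_subset_generate_c_conj[OF assms(1,2)] assms(5) generate_consistent[OF _ V_subgroup] by blast
  then obtain J where J: "J \<subseteq> ?I" "finprod (G\<lparr>carrier := V\<rparr>) c_conj J = v"
    using V.generate_image_subset_prod[OF fin f] by blast
  moreover have "finite J" using J(1) fin finite_subset by blast
  moreover have "c_conj \<in> J \<rightarrow> carrier (G\<lparr>carrier := V\<rparr>)" using J(1) f by auto
  ultimately obtain Q where Q: "Q \<subseteq> J" "finprod (G\<lparr>carrier := V\<rparr>) c_conj Q = v"
    and "2 ^ card Q \<le> card V"
    using V.short_subset_prod[of J c_conj] assms(3) by (auto simp: order_def)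
  then have "(2::nat) ^ card Q \<le> 2 ^ d" using assms(4) by linarith
  then have "card Q \<le> d" by simp
  moreover have "Q \<subseteq> ?I" using Q(1) J(1) by blast
  moreover from this have "finite Q" using fin by (rule finite_subset)
  ultimately show ?thesis using c_conj_prod_word[OF assms(1), of Q] Q(2) by fastforce
qed

end

lemma shift_subset: "0 < p \<Longrightarrow> shift p k u \<subseteq> {..<p}"
  by (auto simp: shift_def)

lemma shift_shift: "shift p a (shift p b u) = shift p (a + b) u"
  unfolding shift_def image_image
  by (rule image_cong) (simp_all add: mod_add_right_eq add.commute add.left_commute)

lemma shift_mod: "shift p (k mod p) u = shift p k u"
  unfolding shift_def by (simp add: mod_add_right_eq)

lemma shift_0: "u \<subseteq> {..<p} \<Longrightarrow> shift p 0 u = u"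
  unfolding shift_def by (simp add: subset_iff cong: image_cong)

lemma inj_on_add_mod: "inj_on (\<lambda>i::nat. (i + k) mod p) {..<p}"
proof (rule inj_onI)
  fix i j assume ij: "i \<in> {..<p}" "j \<in> {..<p}" and "(i + k) mod p = (j + k) mod p"
  then obtain q1 q2 where "i + k + p * q1 = j + k + p * q2" using nat_mod_eq_iff by blast
  then have "i mod p = j mod p" unfolding nat_mod_eq_iff by auto
  then show "i = j" using ij by simp
qed

lemma shift_symdiff:
  assumes "u \<subseteq> {..<p}" "v \<subseteq> {..<p}"
  shows "shift p k (symdiff u v) = symdiff (shift p k u) (shift p k v)"
proof -
  have "(\<lambda>i. (i + k) mod p) ` (A - B) = (\<lambda>i. (i + k) mod p) ` A - (\<lambda>i. (i + k) mod p) ` B"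
    if "A \<subseteq> {..<p}" "B \<subseteq> {..<p}" for A B
    by (rule inj_on_image_set_diff[OF inj_on_add_mod]) (use that in auto)
  then show ?thesis using assms unfolding shift_def symdiff_def image_Un by simp
qed

lemma shift_lessThan: "0 < p \<Longrightarrow> shift p k {..<p} = {..<p}"
  unfolding shift_def by (rule endo_inj_surj) (simp_all add: inj_on_add_mod image_subset_iff)

lemma symdiff_subset: "u \<subseteq> A \<Longrightarrow> v \<subseteq> A \<Longrightarrow> symdiff u v \<subseteq> A"
  by (auto simp: symdiff_def)

lemma carrier_Wp: "carrier (Wp p) = {x. fst x \<subseteq> {..<p} \<and> snd x < p}"
  and mult_Wp: "x \<otimes>\<^bsub>Wp p\<^esub> y = Wmult p x y"
  and one_Wp: "\<one>\<^bsub>Wp p\<^esub> = ({}, 0)"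
  by (simp_all add: Wp_def)

lemma Wp_group:
  assumes p: "0 < p"
  shows "group (Wp p)"
proof (rule groupI)
  fix x y assume "x \<in> carrier (Wp p)" "y \<in> carrier (Wp p)"
  then show "x \<otimes>\<^bsub>Wp p\<^esub> y \<in> carrier (Wp p)"
    using p by (simp add: carrier_Wp mult_Wp Wmult_def symdiff_subset shift_subset)
next
  show "\<one>\<^bsub>Wp p\<^esub> \<in> carrier (Wp p)" using p by (simp add: carrier_Wp one_Wp)
next
  fix x y z assume "x \<in> carrier (Wp p)" "y \<in> carrier (Wp p)" "z \<in> carrier (Wp p)"
  moreover obtain a k b l d m where xyz: "x = (a, k)" "y = (b, l)" "z = (d, m)"
    by (cases x, cases y, cases z) auto
  ultimately have "b \<subseteq> {..<p}" "d \<subseteq> {..<p}" by (auto simp: carrier_Wp)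
  then have "shift p k (symdiff b (shift p l d)) = symdiff (shift p k b) (shift p (k + l) d)"
    using shift_symdiff[OF _ shift_subset[OF p]] by (simp add: shift_shift)
  moreover have "((k + l) mod p + m) mod p = (k + (l + m) mod p) mod p"
    by (simp add: mod_add_left_eq mod_add_right_eq add.assoc)
  moreover have "symdiff (symdiff a u) v = symdiff a (symdiff u v)" for u v
    by (auto simp: symdiff_def)
  ultimately show "x \<otimes>\<^bsub>Wp p\<^esub> y \<otimes>\<^bsub>Wp p\<^esub> z = x \<otimes>\<^bsub>Wp p\<^esub> (y \<otimes>\<^bsub>Wp p\<^esub> z)"
    unfolding xyz by (simp add: mult_Wp Wmult_def shift_mod)
next
  fix x assume "x \<in> carrier (Wp p)"
  then show "\<one>\<^bsub>Wp p\<^esub> \<otimes>\<^bsub>Wp p\<^esub> x = x"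
    by (cases x) (simp add: carrier_Wp one_Wp mult_Wp Wmult_def shift_0 symdiff_def)
next
  fix x assume "x \<in> carrier (Wp p)"
  moreover obtain a k where x: "x = (a, k)" by (cases x)
  ultimately have "k < p" by (simp add: carrier_Wp)
  then have "(shift p (p - k) a, (p - k) mod p) \<otimes>\<^bsub>Wp p\<^esub> x = \<one>\<^bsub>Wp p\<^esub>"
    by (simp add: x mult_Wp Wmult_def one_Wp symdiff_def shift_mod mod_add_left_eq)
  moreover have "(shift p (p - k) a, (p - k) mod p) \<in> carrier (Wp p)"
    using p by (simp add: carrier_Wp shift_subset)
  ultimately show "\<exists>y \<in> carrier (Wp p). y \<otimes>\<^bsub>Wp p\<^esub> x = \<one>\<^bsub>Wp p\<^esub>" by blast
qed

definition tcoset :: "nat \<Rightarrow> nat set \<times> nat \<Rightarrow> (nat set \<times> nat) set" where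
  "tcoset p a = Tp p #>\<^bsub>Wp p\<^esub> a"

context
  fixes p :: nat
  assumes p_pos: "0 < p"
begin

interpretation W: group "Wp p" by (rule Wp_group[OF p_pos])

lemma Tp_normal: "Tp p \<lhd> Wp p"
proof -
  have T: "Tp p \<subseteq> carrier (Wp p)" using p_pos by (simp add: Tp_def carrier_Wp)
  have full: "({..<p}, 0) \<otimes>\<^bsub>Wp p\<^esub> ({..<p}, 0) = ({}, 0)"
    by (simp add: mult_Wp Wmult_def shift_0 symdiff_def)
  have "subgroup (Tp p) (Wp p)"
  proof (rule W.subgroupI)
    fix h assume h: "h \<in> Tp p"
    then have "h \<otimes>\<^bsub>Wp p\<^esub> h = \<one>\<^bsub>Wp p\<^esub>"
      using full by (auto simp: Tp_def one_Wp mult_Wp Wmult_def shift_def symdiff_def)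
    then have "inv\<^bsub>Wp p\<^esub> h = h" using h T by (intro W.inv_equality) auto
    then show "inv\<^bsub>Wp p\<^esub> h \<in> Tp p" using h by simp
  next
    fix h h' assume "h \<in> Tp p" "h' \<in> Tp p"
    then show "h \<otimes>\<^bsub>Wp p\<^esub> h' \<in> Tp p"
      using full by (auto simp: Tp_def mult_Wp Wmult_def shift_def symdiff_def)
  qed (use T in \<open>auto simp: Tp_def\<close>)
  moreover have central: "x \<otimes>\<^bsub>Wp p\<^esub> h = h \<otimes>\<^bsub>Wp p\<^esub> x" if "x \<in> carrier (Wp p)" "h \<in> Tp p" for x h
  proof -
    obtain a k where x: "x = (a, k)" by (cases x)
    then have "a \<subseteq> {..<p}" using that(1) by (simp add: carrier_Wp)
    then show ?thesis using x that(2) shift_0[of a p] shift_lessThan[OF p_pos, of k]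
      by (auto simp: Tp_def mult_Wp Wmult_def symdiff_def shift_def)
  qed
  moreover have "x \<otimes>\<^bsub>Wp p\<^esub> h \<otimes>\<^bsub>Wp p\<^esub> inv\<^bsub>Wp p\<^esub> x = h"
    if "x \<in> carrier (Wp p)" "h \<in> Tp p" for x h
    using central[OF that] that T by (auto simp: W.m_assoc)
  ultimately show ?thesis by (simp add: W.normal_inv_iff)
qed

interpretation T: normal "Tp p" "Wp p" by (rule Tp_normal)

lemma Gp_group: "group (Gp p)"
  unfolding Gp_def by (rule T.factorgroup_is_group)

lemma carrier_Gp: "carrier (Gp p) = tcoset p ` carrier (Wp p)"
  unfolding Gp_def tcoset_def by (rule carrier_FactGroup)

lemma tcoset_hom: "group_hom (Wp p) (Gp p) (tcoset p)"
proof -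
  have "tcoset p = (#>\<^bsub>Wp p\<^esub>) (Tp p)" by (auto simp: tcoset_def)
  then show ?thesis
    using T.r_coset_hom_Mod Gp_group unfolding Gp_def group_hom_def group_hom_axioms_def
    by (simp add: W.is_group)
qed

interpretation tcoset: group_hom "Wp p" "Gp p" "tcoset p" by (rule tcoset_hom)

lemma tcoset_eq: "(u, k) \<in> carrier (Wp p) \<Longrightarrow> tcoset p (u, k) = {(u, k), (symdiff {..<p} u, k)}"
  by (auto simp: tcoset_def r_coset_def Tp_def mult_Wp Wmult_def carrier_Wp shift_0 symdiff_def)

lemma snd_eq_if_tcoset_eq:
  assumes "a \<in> carrier (Wp p)" "b \<in> carrier (Wp p)" "tcoset p a = tcoset p b"
  shows "snd a = snd b"
proof -
  obtain u k v l where ab: "a = (u, k)" "b = (v, l)" by (cases a, cases b)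
  have "b \<in> tcoset p a" using assms ab by (simp add: tcoset_eq)
  then show ?thesis using assms(1) ab by (auto simp: tcoset_eq)
qed

lemma Vp_eq_image: "Vp p = tcoset p ` {x \<in> carrier (Wp p). snd x = 0}"
proof -
  have "{x \<in> carrier (Wp p). snd x = 0} = (\<lambda>u. (u, 0)) ` Pow {..<p}"
    using p_pos by (auto simp: carrier_Wp image_iff prod_eq_iff)
  then show ?thesis unfolding Vp_def tcoset_def by auto
qed

lemma base_subgroup_normal: "{x \<in> carrier (Wp p). snd x = 0} \<lhd> Wp p"
proof -
  have snd_mult: "snd (x \<otimes>\<^bsub>Wp p\<^esub> y) = (snd x + snd y) mod p" for x y
    by (simp add: mult_Wp Wmult_def)
  have snd_inv: "(snd x + snd (inv\<^bsub>Wp p\<^esub> x)) mod p = 0" if "x \<in> carrier (Wp p)" for x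
    using snd_mult[of x "inv\<^bsub>Wp p\<^esub> x"] that by (simp add: one_Wp)
  have snd_lt: "snd x < p" if "x \<in> carrier (Wp p)" for x
    using that by (simp add: carrier_Wp)
  have "subgroup {x \<in> carrier (Wp p). snd x = 0} (Wp p)"
  proof (rule W.subgroupI)
    fix h assume "h \<in> {x \<in> carrier (Wp p). snd x = 0}"
    then show "inv\<^bsub>Wp p\<^esub> h \<in> {x \<in> carrier (Wp p). snd x = 0}"
      using snd_inv[of h] snd_lt[of "inv\<^bsub>Wp p\<^esub> h"] by auto
  next
    show "{x \<in> carrier (Wp p). snd x = 0} \<noteq> {}" using W.one_closed by (auto simp: one_Wp)
  qed (auto simp: snd_mult)
  moreover have "snd (x \<otimes>\<^bsub>Wp p\<^esub> h \<otimes>\<^bsub>Wp p\<^esub> inv\<^bsub>Wp p\<^esub> x) = 0"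
    if "x \<in> carrier (Wp p)" "snd h = 0" for x h
    using that snd_inv[of x] snd_lt[of x] by (simp add: snd_mult)
  ultimately show ?thesis by (auto simp: W.normal_inv_iff)
qed

lemma Vp_normal: "Vp p \<lhd> Gp p"
  unfolding Vp_eq_image
  by (rule normal.surj_hom_normal_subgroup[OF base_subgroup_normal tcoset_hom]) (simp add: carrier_Gp)

lemma Vp_square: "x \<in> Vp p \<Longrightarrow> x \<otimes>\<^bsub>Gp p\<^esub> x = \<one>\<^bsub>Gp p\<^esub>"
proof -
  assume "x \<in> Vp p"
  then obtain u where u: "u \<subseteq> {..<p}" "x = tcoset p (u, 0)" unfolding Vp_def tcoset_def by blast
  then have "(u, 0) \<otimes>\<^bsub>Wp p\<^esub> (u, 0) = \<one>\<^bsub>Wp p\<^esub>"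
    by (simp add: mult_Wp Wmult_def one_Wp shift_0 symdiff_def)
  then show ?thesis using u p_pos by (simp add: tcoset.hom_mult[symmetric] carrier_Wp)
qed

lemma tcoset_pow: "j < p \<Longrightarrow> tcoset p ({}, j) [^]\<^bsub>Gp p\<^esub> n = tcoset p ({}, j * n mod p)"
proof -
  assume j: "j < p"
  have "({}, j) [^]\<^bsub>Wp p\<^esub> n = ({}, j * n mod p)"
  proof (induction n)
    case (Suc n)
    then show ?case
      by (simp add: mult_Wp Wmult_def shift_def symdiff_def) (metis add.commute mod_add_left_eq)
  qed (simp add: one_Wp)
  then show ?thesis using j by (simp add: tcoset.hom_nat_pow[symmetric] carrier_Wp)
qed

lemma Vp_subset_image: "Vp p \<subseteq> (\<lambda>u. tcoset p (u, 0)) ` Pow {..<p - 1}"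
proof
  fix x assume "x \<in> Vp p"
  then obtain u where u: "u \<subseteq> {..<p}" "x = tcoset p (u, 0)" unfolding Vp_def tcoset_def by blast
  have u_carrier: "(u, 0) \<in> carrier (Wp p)" using u(1) p_pos by (simp add: carrier_Wp)
  have below: "{..<p} - {p - 1} = {..<p - 1}" using p_pos by auto
  show "x \<in> (\<lambda>u. tcoset p (u, 0)) ` Pow {..<p - 1}"
  proof (cases "p - 1 \<in> u")
    case False
    then have "u \<subseteq> {..<p - 1}" using u(1) below by blast
    then show ?thesis using u(2) by blast
  next
    case True
    have "{..<p} - u \<subseteq> {..<p - 1}" using True below by blast
    moreover have "tcoset p ({..<p} - u, 0) = x"
      using u u_carrier p_pos by (auto simp: tcoset_eq carrier_Wp symdiff_def)
    ultimately show ?thesis by blast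
  qed
qed

lemma card_Vp_le: "card (Vp p) \<le> 2 ^ (p - 1)"
proof -
  have "card (Vp p) \<le> card ((\<lambda>u. tcoset p (u, 0)) ` Pow {..<p - 1})"
    by (rule card_mono[OF _ Vp_subset_image]) simp
  also have "\<dots> \<le> card (Pow {..<p - 1})" by (rule card_image_le) simp
  finally show ?thesis by (simp add: card_Pow)
qed

lemma one_Gp: "\<one>\<^bsub>Gp p\<^esub> = tcoset p ({}, 0)"
  using tcoset.hom_one by (simp add: one_Wp)

lemma finite_Vp: "finite (Vp p)"
  by (rule finite_subset[OF Vp_subset_image]) simp

lemma boolean_by_cyclic_Gp:
  assumes "c \<in> Cp p" "c \<noteq> \<one>\<^bsub>Gp p\<^esub>"
  shows "boolean_by_cyclic (Gp p) (Vp p) c p"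
proof -
  obtain j where j: "j < p" "c = tcoset p ({}, j)" using assms(1) unfolding Cp_def tcoset_def by blast
  have c_pow: "c [^]\<^bsub>Gp p\<^esub> n = tcoset p ({}, j * n mod p)" for n :: nat
    using tcoset_pow[OF j(1)] j(2) by simp
  show ?thesis
  proof (intro boolean_by_cyclic.intro boolean_by_cyclic_axioms.intro)
    show "group (Gp p)" by (rule Gp_group)
    show "Vp p \<lhd> Gp p" by (rule Vp_normal)
    show "x \<in> Vp p \<Longrightarrow> x \<otimes>\<^bsub>Gp p\<^esub> x = \<one>\<^bsub>Gp p\<^esub>" for x by (rule Vp_square)
    show "c \<in> carrier (Gp p)" using j p_pos by (simp add: carrier_Gp carrier_Wp)
    show "c [^]\<^bsub>Gp p\<^esub> p = \<one>\<^bsub>Gp p\<^esub>" by (simp add: c_pow one_Gp)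
    show "c \<noteq> \<one>\<^bsub>Gp p\<^esub>" "0 < p" by (fact assms(2), fact p_pos)
    fix k :: nat assume "c [^]\<^bsub>Gp p\<^esub> k \<in> Vp p"
    then have "tcoset p ({}, j * k mod p) \<in> tcoset p ` {x \<in> carrier (Wp p). snd x = 0}"
      by (simp only: c_pow Vp_eq_image)
    then obtain a where a: "a \<in> carrier (Wp p)" "snd a = 0" "tcoset p ({}, j * k mod p) = tcoset p a"
      by blast
    have "({}, j * k mod p) \<in> carrier (Wp p)" using p_pos by (simp add: carrier_Wp)
    then have "snd ({} :: nat set, j * k mod p) = snd a" using a(1,3) by (rule snd_eq_if_tcoset_eq)
    then show "c [^]\<^bsub>Gp p\<^esub> k = \<one>\<^bsub>Gp p\<^esub>" using a(2) by (simp add: c_pow one_Gp)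
  qed
qed

end

theorem lemma5:
  fixes p :: nat and c :: "(nat set \<times> nat) set" and W :: "(nat set \<times> nat) set set"
  assumes "prime p" and "odd p"
    and "c \<in> Cp p" and "c \<noteq> \<one>\<^bsub>Gp p\<^esub>"
    and "finite W" and "W \<subseteq> Vp p"
    and "generate (Gp p) (insert c W) = carrier (Gp p)"
  shows "\<forall>v \<in> Vp p. \<exists>ws :: ((nat set \<times> nat) set \<times> bool) list.
           (\<forall>x \<in> set ws. fst x \<in> insert c W) \<and>
           length ws \<le> 3 * (p - 1) \<and>
           length (filter (\<lambda>x. fst x \<in> W) ws) \<le> p - 1 \<and>
           word_eval (Gp p) ws = v"
proof
  fix v assume v: "v \<in> Vp p"
  have p: "0 < p" using assms(1) prime_gt_0_nat by blast
  interpret boolean_by_cyclic "Gp p" "Vp p" c p by (rule boolean_by_cyclic_Gp[OF p assms(3,4)])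
  obtain ws where "\<forall>x \<in> set ws. fst x \<in> insert c W" "length ws \<le> (p - 1) + 2 * (p - 1)"
    "length (filter (\<lambda>x. fst x \<in> W) ws) \<le> p - 1" "word_eval (Gp p) ws = v"
    using short_word[OF assms(6,7) finite_Vp[OF p] card_Vp_le[OF p] v] by blast
  then show "\<exists>ws. (\<forall>x \<in> set ws. fst x \<in> insert c W) \<and> length ws \<le> 3 * (p - 1) \<and>
      length (filter (\<lambda>x. fst x \<in> W) ws) \<le> p - 1 \<and> word_eval (Gp p) ws = v"
    by (intro exI[of _ ws]) auto
qed

end
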